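(* Let $\mathbf{C}$ be a category with a stable system of monics $\mathcal{M}$ that has pushouts along $\mathcal{M}$-morphisms and such that $\mathcal{M}$-morphisms are stable under pushout. Then the source functor $S:\mathsf{PO}_v(\mathbf{C},\mathcal{M})\to\mathbf{C}|_{\mathcal{M}}$ is a Grothendieck opfibration, with op-Cartesian liftings provided by pushouts: for an object $f:A\to B$ and an $\mathcal{M}$-morphism $\alpha:A\rightarrowtail A'$, the pushout $A'\xrightarrow{f'}B'\xleftarrow{\beta}B$ of $(\alpha,f)$ yields an op-Cartesian morphism $(\alpha,\beta):f\to f'$.
   Context: A stable system of monics $\mathcal{M}$ in $\mathbf{C}$ is a class of monomorphisms containing all isomorphisms, closed under composition, and stable under pullback; $\rightarrowtail$ denotes morphisms in $\mathcal{M}$. "Has pushouts along $\mathcal{M}$-morphisms": pushouts of spans $A'\leftarrowtail A\to B$ exist. "$\mathcal{M}$-morphisms are stable under pushout": in any pushout $A'\to B'\xleftarrow{\beta}B$ of a span $A'\xleftarrow{\alpha}A\to B$ with $\alpha\in\mathcal{M}$, one has $\beta\in\mathcal{M}$. $\mathbf{C}|_{\mathcal{M}}$ has the objects of $\mathbf{C}$ and the $\mathcal{M}$-morphisms as morphisms. The category $\mathsf{PO}_v(\mathbf{C},\mathcal{M})$: objects are morphisms $f:A\to B$ of $\mathbf{C}$; a morphism from $f:A\to B$ to $f':A'\to B'$ is a pair $(\alpha,\beta)$ of $\mathcal{M}$-morphisms $\alpha:A\rightarrowtail A'$, $\beta:B\rightarrowtail B'$ with $\beta\circ f=f'\circ\alpha$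 such that this square is a pushout of $(\alpha,f)$; composition is componentwise. $S$ sends $f:A\to B$ to $A$ and $(\alpha,\beta)$ to $\alpha$. For a functor $P:\mathbf{E}\to\mathbf{B}$, a morphism $\varphi:e\to e'$ is op-Cartesian if for every $\psi:e\to e''$ and $g:P(e')\to P(e'')$ with $g\circ P(\varphi)=P(\psi)$ there is a unique $\chi:e'\to e''$ with $\chi\circ\varphi=\psi$ and $P(\chi)=g$; $P$ is a Grothendieck opfibration if every $f:b\to b'$ has an op-Cartesian lifting at every $e$ with $P(e)=b$. *)

theory Defs
  imports Main
begin

text \<open>A category is given by a set of objects, a set of arrows, domain/codomain maps,
identities and composition; comp C g f is "g after f".\<close>

record ('o, 'a) category =
  Obj :: "'o set"
  Arr :: "'a set"
  cdom :: "'a \<Rightarrow> 'o"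
  ccod :: "'a \<Rightarrow> 'o"
  ident :: "'o \<Rightarrow> 'a"
  comp :: "'a \<Rightarrow> 'a \<Rightarrow> 'a"

definition hom :: "('o, 'a, 'x) category_scheme \<Rightarrow> 'o \<Rightarrow> 'o \<Rightarrow> 'a set" where
  "hom C a b = {f \<in> Arr C. cdom C f = a \<and> ccod C f = b}"

definition is_category :: "('o, 'a, 'x) category_scheme \<Rightarrow> bool" where
  "is_category C \<longleftrightarrow>
     (\<forall>f \<in> Arr C. cdom C f \<in> Obj C \<and> ccod C f \<in> Obj C) \<and>
     (\<forall>a \<in> Obj C. ident C a \<in> hom C a a) \<and>
     (\<forall>f \<in> Arr C. comp C f (ident C (cdom C f)) = f \<and> comp C (ident C (ccod C f)) f = f) \<and>
     (\<forall>f \<in> Arr C. \<forall>g \<in> Arr C. ccod C f = cdom C g \<longrightarrow>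
         comp C g f \<in> hom C (cdom C f) (ccod C g)) \<and>
     (\<forall>f \<in> Arr C. \<forall>g \<in> Arr C. \<forall>h \<in> Arr C. ccod C f = cdom C g \<longrightarrow> ccod C g = cdom C h \<longrightarrow>
         comp C h (comp C g f) = comp C (comp C h g) f)"

definition is_mono :: "('o, 'a, 'x) category_scheme \<Rightarrow> 'a \<Rightarrow> bool" where
  "is_mono C m \<longleftrightarrow> m \<in> Arr C \<and>
     (\<forall>g \<in> Arr C. \<forall>h \<in> Arr C. ccod C g = cdom C m \<longrightarrow> ccod C h = cdom C m \<longrightarrow>
        cdom C g = cdom C h \<longrightarrow> comp C m g = comp C m h \<longrightarrow> g = h)"

definition is_iso :: "('o, 'a, 'x) category_scheme \<Rightarrow> 'a \<Rightarrow> bool" where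
  "is_iso C f \<longleftrightarrow> f \<in> Arr C \<and>
     (\<exists>g \<in> hom C (ccod C f) (cdom C f).
        comp C g f = ident C (cdom C f) \<and> comp C f g = ident C (ccod C f))"

text \<open>is_pullback C m g p q: the square with p : P \<rightarrow> Y, q : P \<rightarrow> X, m : X \<rightarrow> Z,
  g : Y \<rightarrow> Z, m \<circ> q = g \<circ> p, is a pullback (p is the pullback of m along g).\<close>

definition is_pullback :: "('o, 'a, 'x) category_scheme \<Rightarrow> 'a \<Rightarrow> 'a \<Rightarrow> 'a \<Rightarrow> 'a \<Rightarrow> bool" where
  "is_pullback C m g p q \<longleftrightarrow>
     m \<in> Arr C \<and> g \<in> Arr C \<and> p \<in> Arr C \<and> q \<in> Arr C \<and>
     ccod C m = ccod C g \<and> ccod C p = cdom C g \<and> ccod C q = cdom C m \<and>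
     cdom C p = cdom C q \<and> comp C m q = comp C g p \<and>
     (\<forall>u \<in> Arr C. \<forall>v \<in> Arr C. ccod C u = cdom C g \<longrightarrow> ccod C v = cdom C m \<longrightarrow>
        cdom C u = cdom C v \<longrightarrow> comp C m v = comp C g u \<longrightarrow>
        (\<exists>!w. w \<in> hom C (cdom C u) (cdom C p) \<and> comp C p w = u \<and> comp C q w = v))"

text \<open>is_pushout C \<alpha> f f' \<beta>: for the span A' \<leftarrow> A \<rightarrow> B given by \<alpha> : A \<rightarrow> A' and
  f : A \<rightarrow> B, the cospan A' \<rightarrow> B' \<leftarrow> B given by f' and \<beta> is a pushout.\<close>

definition is_pushout :: "('o, 'a, 'x) category_scheme \<Rightarrow> 'a \<Rightarrow> 'a \<Rightarrow> 'a \<Rightarrow> 'a \<Rightarrow> bool" where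
  "is_pushout C \<alpha> f f' \<beta> \<longleftrightarrow>
     \<alpha> \<in> Arr C \<and> f \<in> Arr C \<and> f' \<in> Arr C \<and> \<beta> \<in> Arr C \<and>
     cdom C \<alpha> = cdom C f \<and> cdom C f' = ccod C \<alpha> \<and> cdom C \<beta> = ccod C f \<and>
     ccod C f' = ccod C \<beta> \<and> comp C f' \<alpha> = comp C \<beta> f \<and>
     (\<forall>g \<in> Arr C. \<forall>h \<in> Arr C. cdom C g = ccod C \<alpha> \<longrightarrow> cdom C h = ccod C f \<longrightarrow>
        ccod C g = ccod C h \<longrightarrow> comp C g \<alpha> = comp C h f \<longrightarrow>
        (\<exists>!u. u \<in> hom C (ccod C f') (ccod C g) \<and> comp C u f' = g \<and> comp C u \<beta> = h))"

definition stable_system :: "('o, 'a, 'x) category_scheme \<Rightarrow> 'a set \<Rightarrow> bool" where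
  "stable_system C M \<longleftrightarrow>
     (\<forall>m \<in> M. is_mono C m) \<and>
     (\<forall>f. is_iso C f \<longrightarrow> f \<in> M) \<and>
     (\<forall>m \<in> M. \<forall>n \<in> M. ccod C m = cdom C n \<longrightarrow> comp C n m \<in> M) \<and>
     (\<forall>m \<in> M. \<forall>g \<in> Arr C. ccod C g = ccod C m \<longrightarrow>
        (\<exists>p q. is_pullback C m g p q \<and> p \<in> M))"

definition has_pushouts_along :: "('o, 'a, 'x) category_scheme \<Rightarrow> 'a set \<Rightarrow> bool" where
  "has_pushouts_along C M \<longleftrightarrow>
     (\<forall>\<alpha> \<in> M. \<forall>f \<in> Arr C. cdom C f = cdom C \<alpha> \<longrightarrow> (\<exists>f' \<beta>. is_pushout C \<alpha> f f' \<beta>))"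

definition pushout_stable :: "('o, 'a, 'x) category_scheme \<Rightarrow> 'a set \<Rightarrow> bool" where
  "pushout_stable C M \<longleftrightarrow>
     (\<forall>\<alpha> f f' \<beta>. \<alpha> \<in> M \<longrightarrow> is_pushout C \<alpha> f f' \<beta> \<longrightarrow> \<beta> \<in> M)"

definition restr :: "('o, 'a) category \<Rightarrow> 'a set \<Rightarrow> ('o, 'a) category" where
  "restr C M = C\<lparr>Arr := M\<rparr>"

text \<open>PO_v(C,M). A morphism (\<alpha>,\<beta>) : f \<rightarrow> f' is encoded as the quadruple (f, \<alpha>, \<beta>, f').\<close>

definition POv :: "('o, 'a) category \<Rightarrow> 'a set \<Rightarrow> ('a, 'a \<times> 'a \<times> 'a \<times> 'a) category" where
  "POv C M = \<lparr>
     Obj = Arr C,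
     Arr = {(f, \<alpha>, \<beta>, f'). f \<in> Arr C \<and> f' \<in> Arr C \<and> \<alpha> \<in> M \<and> \<beta> \<in> M \<and>
              cdom C \<alpha> = cdom C f \<and> ccod C \<alpha> = cdom C f' \<and>
              cdom C \<beta> = ccod C f \<and> ccod C \<beta> = ccod C f' \<and>
              comp C \<beta> f = comp C f' \<alpha> \<and> is_pushout C \<alpha> f f' \<beta>},
     cdom = (\<lambda>(f, \<alpha>, \<beta>, f'). f),
     ccod = (\<lambda>(f, \<alpha>, \<beta>, f'). f'),
     ident = (\<lambda>f. (f, ident C (cdom C f), ident C (ccod C f), f)),
     comp = (\<lambda>(g, \<alpha>', \<beta>', g') (f, \<alpha>, \<beta>, f'). (f, comp C \<alpha>' \<alpha>, comp C \<beta>' \<beta>, g'))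
   \<rparr>"

definition S_obj :: "('o, 'a) category \<Rightarrow> 'a \<Rightarrow> 'o" where
  "S_obj C f = cdom C f"

definition S_arr :: "'a \<times> 'a \<times> 'a \<times> 'a \<Rightarrow> 'a" where
  "S_arr = (\<lambda>(f, \<alpha>, \<beta>, f'). \<alpha>)"

definition is_functor ::
  "('o1, 'a1, 'x) category_scheme \<Rightarrow> ('o2, 'a2, 'y) category_scheme \<Rightarrow>
   ('o1 \<Rightarrow> 'o2) \<Rightarrow> ('a1 \<Rightarrow> 'a2) \<Rightarrow> bool" where
  "is_functor E B Fo Fa \<longleftrightarrow>
     is_category E \<and> is_category B \<and>
     (\<forall>e \<in> Obj E. Fo e \<in> Obj B) \<and>
     (\<forall>\<phi> \<in> Arr E. Fa \<phi> \<in> hom B (Fo (cdom E \<phi>)) (Fo (ccod E \<phi>))) \<and>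
     (\<forall>e \<in> Obj E. Fa (ident E e) = ident B (Fo e)) \<and>
     (\<forall>\<phi> \<in> Arr E. \<forall>\<psi> \<in> Arr E. ccod E \<phi> = cdom E \<psi> \<longrightarrow>
        Fa (comp E \<psi> \<phi>) = comp B (Fa \<psi>) (Fa \<phi>))"

definition op_cartesian ::
  "('o1, 'a1, 'x) category_scheme \<Rightarrow> ('o2, 'a2, 'y) category_scheme \<Rightarrow>
   ('o1 \<Rightarrow> 'o2) \<Rightarrow> ('a1 \<Rightarrow> 'a2) \<Rightarrow> 'a1 \<Rightarrow> bool" where
  "op_cartesian E B Fo Fa \<phi> \<longleftrightarrow> \<phi> \<in> Arr E \<and>
     (\<forall>\<psi> \<in> Arr E. \<forall>g \<in> hom B (Fo (ccod E \<phi>)) (Fo (ccod E \<psi>)).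
        cdom E \<psi> = cdom E \<phi> \<longrightarrow> comp B g (Fa \<phi>) = Fa \<psi> \<longrightarrow>
        (\<exists>!\<chi>. \<chi> \<in> hom E (ccod E \<phi>) (ccod E \<psi>) \<and> comp E \<chi> \<phi> = \<psi> \<and> Fa \<chi> = g))"

definition grothendieck_opfibration ::
  "('o1, 'a1, 'x) category_scheme \<Rightarrow> ('o2, 'a2, 'y) category_scheme \<Rightarrow>
   ('o1 \<Rightarrow> 'o2) \<Rightarrow> ('a1 \<Rightarrow> 'a2) \<Rightarrow> bool" where
  "grothendieck_opfibration E B Fo Fa \<longleftrightarrow>
     is_functor E B Fo Fa \<and>
     (\<forall>e \<in> Obj E. \<forall>f \<in> Arr B. cdom B f = Fo e \<longrightarrow>
        (\<exists>\<phi>. \<phi> \<in> Arr E \<and> cdom E \<phi> = e \<and> Fa \<phi> = f \<and> op_cartesian E B Fo Fa \<phi>))"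

end

(*
  Pushout squares paste: if the left square of a horizontal composite is a pushout,
  then the right square is a pushout iff the outer rectangle is.  Composition in
  PO_v(C, M) is pasting, so PO_v(C, M) is a category and S is a functor.  Given a
  pushout square (alpha, beta): f -> f' and a morphism (g alpha, beta''): f -> f''
  lying over g, the universal property of the first square gives the unique u with
  u beta = beta'' and u f' = f'' g, and by cancellation (g, u): f' -> f'' is again a
  pushout square; it lies in PO_v(C, M) because M is stable under pushout.
*)
theory Submission
  imports Defs
begin

locale cat =
  fixes C :: "('o, 'a, 'x) category_scheme"
  assumes is_category: "is_category C"
begin

lemma cdom_in_Obj: "f \<in> Arr C \<Longrightarrow> cdom C f \<in> Obj C"
  and ccod_in_Obj: "f \<in> Arr C \<Longrightarrow> ccod C f \<in> Obj C"
  using is_category unfolding is_category_def by blast+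

lemma ident_in_Arr [simp]: "a \<in> Obj C \<Longrightarrow> ident C a \<in> Arr C"
  and cdom_ident [simp]: "a \<in> Obj C \<Longrightarrow> cdom C (ident C a) = a"
  and ccod_ident [simp]: "a \<in> Obj C \<Longrightarrow> ccod C (ident C a) = a"
  using is_category unfolding is_category_def hom_def by blast+

lemma comp_ident_cdom [simp]: "f \<in> Arr C \<Longrightarrow> comp C f (ident C (cdom C f)) = f"
  and comp_ident_ccod [simp]: "f \<in> Arr C \<Longrightarrow> comp C (ident C (ccod C f)) f = f"
  using is_category unfolding is_category_def by blast+

lemma comp_in_Arr [simp]: "f \<in> Arr C \<Longrightarrow> g \<in> Arr C \<Longrightarrow> ccod C f = cdom C g \<Longrightarrow> comp C g f \<in> Arr C"
  and cdom_comp [simp]: "f \<in> Arr C \<Longrightarrow> g \<in> Arr C \<Longrightarrow> ccod C f = cdom C g \<Longrightarrow> cdom C (comp C g f) = cdom C f"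
  and ccod_comp [simp]: "f \<in> Arr C \<Longrightarrow> g \<in> Arr C \<Longrightarrow> ccod C f = cdom C g \<Longrightarrow> ccod C (comp C g f) = ccod C g"
  using is_category unfolding is_category_def hom_def by blast+

lemma comp_assoc:
  "f \<in> Arr C \<Longrightarrow> g \<in> Arr C \<Longrightarrow> h \<in> Arr C \<Longrightarrow> ccod C f = cdom C g \<Longrightarrow> ccod C g = cdom C h \<Longrightarrow>
   comp C (comp C h g) f = comp C h (comp C g f)"
  using is_category unfolding is_category_def by metis

end

definition commuting_square :: "('o, 'a, 'x) category_scheme \<Rightarrow> 'a \<Rightarrow> 'a \<Rightarrow> 'a \<Rightarrow> 'a \<Rightarrow> bool" where
  "commuting_square C \<alpha> f g h \<longleftrightarrow>
     \<alpha> \<in> Arr C \<and> f \<in> Arr C \<and> g \<in> Arr C \<and> h \<in> Arr C \<and>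
     cdom C \<alpha> = cdom C f \<and> cdom C g = ccod C \<alpha> \<and> cdom C h = ccod C f \<and>
     ccod C g = ccod C h \<and> comp C g \<alpha> = comp C h f"

lemma is_pushout_iff:
  "is_pushout C \<alpha> f f' \<beta> \<longleftrightarrow> commuting_square C \<alpha> f f' \<beta> \<and>
     (\<forall>g h. commuting_square C \<alpha> f g h \<longrightarrow>
        (\<exists>!u. u \<in> hom C (ccod C f') (ccod C g) \<and> comp C u f' = g \<and> comp C u \<beta> = h))"
  unfolding is_pushout_def commuting_square_def by blast

lemma pushout_commuting_square: "is_pushout C \<alpha> f f' \<beta> \<Longrightarrow> commuting_square C \<alpha> f f' \<beta>"
  by (simp add: is_pushout_iff)

lemma is_pushoutI:
  assumes "commuting_square C \<alpha> f f' \<beta>"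
    and "\<And>g h. commuting_square C \<alpha> f g h \<Longrightarrow>
           \<exists>u \<in> hom C (ccod C f') (ccod C g). comp C u f' = g \<and> comp C u \<beta> = h"
    and "\<And>u v. u \<in> Arr C \<Longrightarrow> v \<in> Arr C \<Longrightarrow> cdom C u = ccod C f' \<Longrightarrow> cdom C v = ccod C f' \<Longrightarrow>
           comp C u f' = comp C v f' \<Longrightarrow> comp C u \<beta> = comp C v \<beta> \<Longrightarrow> u = v"
  shows "is_pushout C \<alpha> f f' \<beta>"
  using assms unfolding is_pushout_iff hom_def by (metis (mono_tags, lifting) mem_Collect_eq)

context cat
begin

lemma commuting_square_paste:
  assumes sq1: "commuting_square C \<alpha> f f' \<beta>" and sq2: "commuting_square C g f' f'' u"
  shows "commuting_square C (comp C g \<alpha>) f f'' (comp C u \<beta>)"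
proof -
  note s = sq1[unfolded commuting_square_def] sq2[unfolded commuting_square_def]
  have "comp C f'' (comp C g \<alpha>) = comp C (comp C f'' g) \<alpha>"
    using s by (metis comp_assoc)
  also have "\<dots> = comp C u (comp C f' \<alpha>)"
    using s by (metis comp_assoc)
  also have "\<dots> = comp C (comp C u \<beta>) f"
    using s by (metis comp_assoc)
  finally show ?thesis
    using s unfolding commuting_square_def by simp
qed

lemma commuting_square_postcompose:
  assumes sq: "commuting_square C \<alpha> f g h" and k: "k \<in> Arr C" "cdom C k = ccod C g"
  shows "commuting_square C \<alpha> f (comp C k g) (comp C k h)"
proof -
  have "comp C (comp C k g) \<alpha> = comp C (comp C k h) f"
    using sq k comp_assoc unfolding commuting_square_def by metis
  then show ?thesis
    using sq k unfolding commuting_square_def by simp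
qed

lemma commuting_square_shift:
  assumes sq: "commuting_square C (comp C g \<alpha>) f x y"
    and \<alpha>: "\<alpha> \<in> Arr C" and g: "g \<in> Arr C" "cdom C g = ccod C \<alpha>"
  shows "commuting_square C \<alpha> f (comp C x g) y"
  using sq \<alpha> g comp_assoc[of \<alpha> g x] unfolding commuting_square_def by auto

lemma pushout_factor:
  assumes "is_pushout C \<alpha> f f' \<beta>" and "commuting_square C \<alpha> f g h"
  obtains u where "u \<in> Arr C" "cdom C u = ccod C f'" "ccod C u = ccod C g"
    "comp C u f' = g" "comp C u \<beta> = h"
  using assms unfolding is_pushout_iff hom_def by blast

lemma pushout_jointly_epi:
  assumes P: "is_pushout C \<alpha> f f' \<beta>"
    and eq: "comp C u f' = comp C v f'" "comp C u \<beta> = comp C v \<beta>"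
    and u: "u \<in> Arr C" "cdom C u = ccod C f'" and v: "v \<in> Arr C" "cdom C v = ccod C f'"
  shows "u = v"
proof -
  have sq: "commuting_square C \<alpha> f f' \<beta>"
    using P by (rule pushout_commuting_square)
  then have "commuting_square C \<alpha> f (comp C u f') (comp C u \<beta>)"
    using u by (rule commuting_square_postcompose)
  moreover have "ccod C u = ccod C (comp C u f')" "ccod C v = ccod C (comp C u f')"
    using sq u v eq(1) unfolding commuting_square_def by (metis ccod_comp)+
  ultimately have "\<exists>!w. w \<in> hom C (ccod C f') (ccod C u) \<and> comp C w f' = comp C u f' \<and> comp C w \<beta> = comp C u \<beta>"
    using P unfolding is_pushout_iff by simp
  then show ?thesis
    using u v eq \<open>ccod C u = _\<close> \<open>ccod C v = _\<close> unfolding hom_def by auto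
qed

lemma pushout_paste:
  assumes P1: "is_pushout C \<alpha> f f' \<beta>" and P2: "is_pushout C g f' f'' u"
  shows "is_pushout C (comp C g \<alpha>) f f'' (comp C u \<beta>)"
proof -
  have sq1: "commuting_square C \<alpha> f f' \<beta>" and sq2: "commuting_square C g f' f'' u"
    using P1 P2 by (simp_all add: pushout_commuting_square)
  note s = sq1[unfolded commuting_square_def] sq2[unfolded commuting_square_def]
  show ?thesis
  proof (rule is_pushoutI)
    from sq1 sq2 show "commuting_square C (comp C g \<alpha>) f f'' (comp C u \<beta>)"
      by (rule commuting_square_paste)
    fix x y assume sq: "commuting_square C (comp C g \<alpha>) f x y"
    then have "commuting_square C \<alpha> f (comp C x g) y"
      by (rule commuting_square_shift) (use s in auto)
    with P1 obtain k where k: "k \<in> Arr C" "cdom C k = ccod C f'" "ccod C k = ccod C (comp C x g)"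
      "comp C k f' = comp C x g" "comp C k \<beta> = y"
      by (rule pushout_factor)
    have "commuting_square C g f' x k"
      using sq s k unfolding commuting_square_def by auto
    with P2 obtain m where m: "m \<in> Arr C" "cdom C m = ccod C f''" "ccod C m = ccod C x"
      "comp C m f'' = x" "comp C m u = k"
      by (rule pushout_factor)
    have "comp C m (comp C u \<beta>) = y"
      using s m k comp_assoc[of \<beta> u m] by simp
    then show "\<exists>m \<in> hom C (ccod C f'') (ccod C x). comp C m f'' = x \<and> comp C m (comp C u \<beta>) = y"
      using m unfolding hom_def by auto
  next
    fix m m' assume m: "m \<in> Arr C" "cdom C m = ccod C f''" and m': "m' \<in> Arr C" "cdom C m' = ccod C f''"
      and eq: "comp C m f'' = comp C m' f''" "comp C m (comp C u \<beta>) = comp C m' (comp C u \<beta>)"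
    have "comp C (comp C m u) f' = comp C (comp C m' u) f'"
      using s m m' eq(1) by (metis comp_assoc)
    moreover have "comp C (comp C m u) \<beta> = comp C (comp C m' u) \<beta>"
      using s m m' eq(2) by (metis comp_assoc)
    ultimately have mu: "comp C m u = comp C m' u"
      by (rule pushout_jointly_epi[OF P1]) (use s m m' in auto)
    show "m = m'"
      by (rule pushout_jointly_epi[OF P2 eq(1) mu]) (use m m' in auto)
  qed
qed

lemma pushout_cancel:
  assumes P1: "is_pushout C \<alpha> f f' \<beta>" and P: "is_pushout C (comp C g \<alpha>) f f'' (comp C u \<beta>)"
    and sq2: "commuting_square C g f' f'' u"
  shows "is_pushout C g f' f'' u"
proof -
  have sq1: "commuting_square C \<alpha> f f' \<beta>"
    using P1 by (rule pushout_commuting_square)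
  note s = sq1[unfolded commuting_square_def] sq2[unfolded commuting_square_def]
  show ?thesis
  proof (rule is_pushoutI)
    show "commuting_square C g f' f'' u" by (fact sq2)
    fix x k assume sq: "commuting_square C g f' x k"
    with sq1 have "commuting_square C (comp C g \<alpha>) f x (comp C k \<beta>)"
      by (rule commuting_square_paste)
    with P obtain m where m: "m \<in> Arr C" "cdom C m = ccod C f''" "ccod C m = ccod C x"
      "comp C m f'' = x" "comp C m (comp C u \<beta>) = comp C k \<beta>"
      by (rule pushout_factor)
    note t = sq[unfolded commuting_square_def]
    have "comp C (comp C m u) f' = comp C k f'"
      using s t m by (metis comp_assoc)
    moreover have "comp C (comp C m u) \<beta> = comp C k \<beta>"
      using s m comp_assoc[of \<beta> u m] by simp
    ultimately have "comp C m u = k"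
      by (rule pushout_jointly_epi[OF P1]) (use s t m in auto)
    then show "\<exists>m \<in> hom C (ccod C f'') (ccod C x). comp C m f'' = x \<and> comp C m u = k"
      using m unfolding hom_def by auto
  next
    fix m m' assume m: "m \<in> Arr C" "cdom C m = ccod C f''" and m': "m' \<in> Arr C" "cdom C m' = ccod C f''"
      and eq: "comp C m f'' = comp C m' f''" "comp C m u = comp C m' u"
    have mu\<beta>: "comp C m (comp C u \<beta>) = comp C m' (comp C u \<beta>)"
      using s m m' eq(2) by (metis comp_assoc)
    show "m = m'"
      by (rule pushout_jointly_epi[OF P eq(1) mu\<beta>]) (use m m' in auto)
  qed
qed

lemma pushout_factorization:
  assumes P: "is_pushout C \<alpha> f f' \<beta>" and P': "is_pushout C (comp C g \<alpha>) f f'' \<beta>''"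
    and g: "g \<in> Arr C" "cdom C g = ccod C \<alpha>" "ccod C g = cdom C f''"
  obtains u where "is_pushout C g f' f'' u" "comp C u \<beta> = \<beta>''"
proof -
  note s = pushout_commuting_square[OF P, unfolded commuting_square_def]
  have "commuting_square C \<alpha> f (comp C f'' g) \<beta>''"
    using pushout_commuting_square[OF P'] by (rule commuting_square_shift) (use s g in auto)
  with P obtain u where u: "u \<in> Arr C" "cdom C u = ccod C f'" "ccod C u = ccod C (comp C f'' g)"
    "comp C u f' = comp C f'' g" "comp C u \<beta> = \<beta>''"
    by (rule pushout_factor)
  have "commuting_square C g f' f'' u"
    using s g u P' unfolding commuting_square_def is_pushout_def by auto
  then have "is_pushout C g f' f'' u"
    using pushout_cancel[OF P] P' u(5) by simp
  then show thesis
    using u(5) by (rule that)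
qed

lemma iso_ident:
  assumes a: "a \<in> Obj C"
  shows "is_iso C (ident C a)"
proof -
  have "comp C (ident C a) (ident C a) = ident C a"
    using a comp_ident_cdom[of "ident C a"] by simp
  then show ?thesis
    using a unfolding is_iso_def hom_def by (auto intro!: exI[of _ "ident C a"])
qed

lemma pushout_ident:
  assumes f: "f \<in> Arr C"
  shows "is_pushout C (ident C (cdom C f)) f f (ident C (ccod C f))"
proof (rule is_pushoutI)
  show "commuting_square C (ident C (cdom C f)) f f (ident C (ccod C f))"
    using f cdom_in_Obj ccod_in_Obj unfolding commuting_square_def by simp
  fix g h assume "commuting_square C (ident C (cdom C f)) f g h"
  then have h: "h \<in> Arr C" "cdom C h = ccod C f" "ccod C h = ccod C g"
    and g: "g = comp C h f"
    using f cdom_in_Obj comp_ident_cdom[of g] unfolding commuting_square_def by auto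
  show "\<exists>u \<in> hom C (ccod C f) (ccod C g). comp C u f = g \<and> comp C u (ident C (ccod C f)) = h"
    using h g comp_ident_cdom[of h] unfolding hom_def by auto
next
  fix u v assume "u \<in> Arr C" "v \<in> Arr C" "cdom C u = ccod C f" "cdom C v = ccod C f"
    and "comp C u (ident C (ccod C f)) = comp C v (ident C (ccod C f))"
  then show "u = v"
    using comp_ident_cdom[of u] comp_ident_cdom[of v] by simp
qed

end

locale pushout_stable_system = cat C for C :: "('o, 'a) category" +
  fixes M :: "'a set"
  assumes stable_system: "stable_system C M" and pushout_stable: "pushout_stable C M"
begin

lemma M_in_Arr: "m \<in> M \<Longrightarrow> m \<in> Arr C"
  using stable_system unfolding stable_system_def is_mono_def by blast

lemma comp_in_M: "m \<in> M \<Longrightarrow> n \<in> M \<Longrightarrow> ccod C m = cdom C n \<Longrightarrow> comp C n m \<in> M"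
  using stable_system unfolding stable_system_def by blast

lemma ident_in_M: "a \<in> Obj C \<Longrightarrow> ident C a \<in> M"
  using stable_system iso_ident unfolding stable_system_def by blast

lemma pushout_in_M: "\<alpha> \<in> M \<Longrightarrow> is_pushout C \<alpha> f f' \<beta> \<Longrightarrow> \<beta> \<in> M"
  using pushout_stable unfolding pushout_stable_def by blast

lemma POv_simps [simp]:
  "Obj (POv C M) = Arr C"
  "cdom (POv C M) (f, \<alpha>, \<beta>, f') = f"
  "ccod (POv C M) (f, \<alpha>, \<beta>, f') = f'"
  "ident (POv C M) f = (f, ident C (cdom C f), ident C (ccod C f), f)"
  "comp (POv C M) (g, \<alpha>', \<beta>', g') (f, \<alpha>, \<beta>, f') = (f, comp C \<alpha>' \<alpha>, comp C \<beta>' \<beta>, g')"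
  by (simp_all add: POv_def)

lemma Arr_POv_iff: "(f, \<alpha>, \<beta>, f') \<in> Arr (POv C M) \<longleftrightarrow> \<alpha> \<in> M \<and> is_pushout C \<alpha> f f' \<beta>"
proof -
  have "is_pushout C \<alpha> f f' \<beta> \<Longrightarrow> comp C \<beta> f = comp C f' \<alpha>"
    by (simp add: is_pushout_def)
  then show ?thesis
    using pushout_in_M unfolding POv_def by (auto simp: is_pushout_iff commuting_square_def)
qed

lemma restr_simps [simp]:
  "Obj (restr C M) = Obj C" "Arr (restr C M) = M" "cdom (restr C M) = cdom C"
  "ccod (restr C M) = ccod C" "ident (restr C M) = ident C" "comp (restr C M) = comp C"
  by (simp_all add: restr_def)

lemma Arr_POv_cases:
  assumes "\<phi> \<in> Arr (POv C M)"
  obtains f \<alpha> \<beta> f' where "\<phi> = (f, \<alpha>, \<beta>, f')" "\<alpha> \<in> M" "is_pushout C \<alpha> f f' \<beta>"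
  using assms Arr_POv_iff by (cases \<phi>) auto

lemma paste_in_Arr_POv:
  assumes "(f, \<alpha>, \<beta>, g) \<in> Arr (POv C M)" and "(g, \<alpha>', \<beta>', h) \<in> Arr (POv C M)"
  shows "(f, comp C \<alpha>' \<alpha>, comp C \<beta>' \<beta>, h) \<in> Arr (POv C M)"
proof -
  have P1: "is_pushout C \<alpha> f g \<beta>" and P2: "is_pushout C \<alpha>' g h \<beta>'" and "\<alpha> \<in> M" "\<alpha>' \<in> M"
    using assms by (simp_all add: Arr_POv_iff)
  moreover have "ccod C \<alpha> = cdom C \<alpha>'"
    using P1 P2 by (simp add: is_pushout_def)
  ultimately show ?thesis
    by (simp add: Arr_POv_iff comp_in_M pushout_paste)
qed

lemma category_POv: "is_category (POv C M)"
  unfolding is_category_def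
proof (intro conjI ballI impI)
  fix \<phi> assume "\<phi> \<in> Arr (POv C M)"
  then obtain f \<alpha> \<beta> f' where \<phi>: "\<phi> = (f, \<alpha>, \<beta>, f')" and "is_pushout C \<alpha> f f' \<beta>"
    by (rule Arr_POv_cases)
  then have s: "\<alpha> \<in> Arr C" "\<beta> \<in> Arr C" "f \<in> Arr C" "f' \<in> Arr C"
    "cdom C f = cdom C \<alpha>" "ccod C f = cdom C \<beta>" "cdom C f' = ccod C \<alpha>" "ccod C f' = ccod C \<beta>"
    by (auto simp: is_pushout_def)
  then show "cdom (POv C M) \<phi> \<in> Obj (POv C M)" "ccod (POv C M) \<phi> \<in> Obj (POv C M)"
    using \<phi> by simp_all
  show "comp (POv C M) \<phi> (ident (POv C M) (cdom (POv C M) \<phi>)) = \<phi>"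
    "comp (POv C M) (ident (POv C M) (ccod (POv C M) \<phi>)) \<phi> = \<phi>"
    using \<phi> s by simp_all
next
  fix f assume "f \<in> Obj (POv C M)"
  then show "ident (POv C M) f \<in> hom (POv C M) f f"
    unfolding hom_def using Arr_POv_iff pushout_ident ident_in_M cdom_in_Obj by simp
next
  fix \<phi> \<psi> assume "\<phi> \<in> Arr (POv C M)" "\<psi> \<in> Arr (POv C M)"
    and "ccod (POv C M) \<phi> = cdom (POv C M) \<psi>"
  then obtain f \<alpha> \<beta> g \<alpha>' \<beta>' h where "\<phi> = (f, \<alpha>, \<beta>, g)" "\<psi> = (g, \<alpha>', \<beta>', h)"
    "(f, \<alpha>, \<beta>, g) \<in> Arr (POv C M)" "(g, \<alpha>', \<beta>', h) \<in> Arr (POv C M)"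
    by (metis POv_simps(2,3) prod_cases4)
  then show "comp (POv C M) \<psi> \<phi> \<in> hom (POv C M) (cdom (POv C M) \<phi>) (ccod (POv C M) \<psi>)"
    unfolding hom_def by (simp add: paste_in_Arr_POv)
next
  fix \<phi> \<psi> \<chi> assume "\<phi> \<in> Arr (POv C M)" "\<psi> \<in> Arr (POv C M)" "\<chi> \<in> Arr (POv C M)"
    and "ccod (POv C M) \<phi> = cdom (POv C M) \<psi>" "ccod (POv C M) \<psi> = cdom (POv C M) \<chi>"
  then obtain f \<alpha> \<beta> g \<alpha>' \<beta>' h \<alpha>'' \<beta>'' k where
    "\<phi> = (f, \<alpha>, \<beta>, g)" "is_pushout C \<alpha> f g \<beta>"
    "\<psi> = (g, \<alpha>', \<beta>', h)" "is_pushout C \<alpha>' g h \<beta>'"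
    "\<chi> = (h, \<alpha>'', \<beta>'', k)" "is_pushout C \<alpha>'' h k \<beta>''"
    by (metis Arr_POv_cases POv_simps(2,3))
  then show "comp (POv C M) \<chi> (comp (POv C M) \<psi> \<phi>) = comp (POv C M) (comp (POv C M) \<chi> \<psi>) \<phi>"
    using comp_assoc[of \<alpha> \<alpha>' \<alpha>''] comp_assoc[of \<beta> \<beta>' \<beta>''] by (simp add: is_pushout_def)
qed

lemma category_restr: "is_category (restr C M)"
  using M_in_Arr cdom_in_Obj ccod_in_Obj ident_in_M comp_in_M comp_assoc
  unfolding is_category_def hom_def by simp

lemma functor_S: "is_functor (POv C M) (restr C M) (S_obj C) S_arr"
  unfolding is_functor_def
proof (intro conjI ballI impI category_POv category_restr)
  fix f assume "f \<in> Obj (POv C M)"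
  then show "S_obj C f \<in> Obj (restr C M)"
    by (simp add: S_obj_def cdom_in_Obj)
next
  fix \<phi> assume "\<phi> \<in> Arr (POv C M)"
  then obtain f \<alpha> \<beta> f' where "\<phi> = (f, \<alpha>, \<beta>, f')" "\<alpha> \<in> M" "is_pushout C \<alpha> f f' \<beta>"
    by (rule Arr_POv_cases)
  then show "S_arr \<phi> \<in> hom (restr C M) (S_obj C (cdom (POv C M) \<phi>)) (S_obj C (ccod (POv C M) \<phi>))"
    unfolding hom_def S_arr_def S_obj_def is_pushout_def by simp
next
  fix f show "S_arr (ident (POv C M) f) = ident (restr C M) (S_obj C f)"
    by (simp add: S_arr_def S_obj_def)
next
  fix \<phi> \<psi> :: "'a \<times> 'a \<times> 'a \<times> 'a"
  show "S_arr (comp (POv C M) \<psi> \<phi>) = comp (restr C M) (S_arr \<psi>) (S_arr \<phi>)"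
    by (cases \<phi>, cases \<psi>) (simp add: S_arr_def)
qed

lemma op_cartesian_pushout:
  assumes \<alpha>: "\<alpha> \<in> M" and P: "is_pushout C \<alpha> f f' \<beta>"
  shows "op_cartesian (POv C M) (restr C M) (S_obj C) S_arr (f, \<alpha>, \<beta>, f')"
  unfolding op_cartesian_def
proof (intro conjI ballI impI)
  show "(f, \<alpha>, \<beta>, f') \<in> Arr (POv C M)"
    using \<alpha> P by (simp add: Arr_POv_iff)
  fix \<psi> g
  assume \<psi>: "\<psi> \<in> Arr (POv C M)"
    and g: "g \<in> hom (restr C M) (S_obj C (ccod (POv C M) (f, \<alpha>, \<beta>, f'))) (S_obj C (ccod (POv C M) \<psi>))"
    and same_cdom: "cdom (POv C M) \<psi> = cdom (POv C M) (f, \<alpha>, \<beta>, f')"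
    and over: "comp (restr C M) g (S_arr (f, \<alpha>, \<beta>, f')) = S_arr \<psi>"
  obtain f'' \<beta>'' where \<psi>_eq: "\<psi> = (f, comp C g \<alpha>, \<beta>'', f'')"
    and P': "is_pushout C (comp C g \<alpha>) f f'' \<beta>''"
    using \<psi> same_cdom over by (elim Arr_POv_cases) (simp add: S_arr_def)
  have g: "g \<in> M" "g \<in> Arr C" "cdom C g = ccod C \<alpha>" "ccod C g = cdom C f''"
    using g P \<psi>_eq M_in_Arr unfolding hom_def by (auto simp: S_obj_def is_pushout_def)
  obtain u where P2: "is_pushout C g f' f'' u" and u: "comp C u \<beta> = \<beta>''"
    using pushout_factorization[OF P P' g(2-4)] .
  show "\<exists>!\<chi>. \<chi> \<in> hom (POv C M) (ccod (POv C M) (f, \<alpha>, \<beta>, f')) (ccod (POv C M) \<psi>) \<and>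
          comp (POv C M) \<chi> (f, \<alpha>, \<beta>, f') = \<psi> \<and> S_arr \<chi> = g"
  proof (rule ex1I)
    show "(f', g, u, f'') \<in> hom (POv C M) (ccod (POv C M) (f, \<alpha>, \<beta>, f')) (ccod (POv C M) \<psi>) \<and>
          comp (POv C M) (f', g, u, f'') (f, \<alpha>, \<beta>, f') = \<psi> \<and> S_arr (f', g, u, f'') = g"
      using g P2 \<psi>_eq u unfolding hom_def by (simp add: Arr_POv_iff S_arr_def)
  next
    fix \<chi>
    assume \<chi>: "\<chi> \<in> hom (POv C M) (ccod (POv C M) (f, \<alpha>, \<beta>, f')) (ccod (POv C M) \<psi>) \<and>
          comp (POv C M) \<chi> (f, \<alpha>, \<beta>, f') = \<psi> \<and> S_arr \<chi> = g"
    then have "\<chi> \<in> Arr (POv C M)"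
      unfolding hom_def by simp
    then obtain f\<^sub>1 g\<^sub>1 u' f\<^sub>2 where \<chi>_eq: "\<chi> = (f\<^sub>1, g\<^sub>1, u', f\<^sub>2)" and "is_pushout C g\<^sub>1 f\<^sub>1 f\<^sub>2 u'"
      by (rule Arr_POv_cases)
    moreover have "f\<^sub>1 = f'" "g\<^sub>1 = g" "f\<^sub>2 = f''" "comp C u' \<beta> = \<beta>''"
      using \<chi> \<chi>_eq \<psi>_eq unfolding hom_def by (simp_all add: S_arr_def)
    ultimately have "comp C u' f' = comp C u f'" "comp C u' \<beta> = comp C u \<beta>"
      "u' \<in> Arr C" "cdom C u' = ccod C f'"
      using P2 u by (auto simp: is_pushout_def)
    then have "u' = u"
      by (rule pushout_jointly_epi[OF P]) (use P2 in \<open>auto simp: is_pushout_def\<close>)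
    with \<chi>_eq \<open>f\<^sub>1 = f'\<close> \<open>g\<^sub>1 = g\<close> \<open>f\<^sub>2 = f''\<close> show "\<chi> = (f', g, u, f'')"
      by simp
  qed
qed

lemma grothendieck_opfibration_S:
  assumes "has_pushouts_along C M"
  shows "grothendieck_opfibration (POv C M) (restr C M) (S_obj C) S_arr"
  unfolding grothendieck_opfibration_def
proof (intro conjI functor_S ballI impI)
  fix f \<alpha> assume f: "f \<in> Obj (POv C M)" and \<alpha>: "\<alpha> \<in> Arr (restr C M)"
    and "cdom (restr C M) \<alpha> = S_obj C f"
  then have "\<alpha> \<in> M" "f \<in> Arr C" "cdom C f = cdom C \<alpha>"
    by (simp_all add: S_obj_def)
  then obtain f' \<beta> where P: "is_pushout C \<alpha> f f' \<beta>"
    using assms unfolding has_pushouts_along_def by blast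
  show "\<exists>\<phi>. \<phi> \<in> Arr (POv C M) \<and> cdom (POv C M) \<phi> = f \<and> S_arr \<phi> = \<alpha> \<and>
          op_cartesian (POv C M) (restr C M) (S_obj C) S_arr \<phi>"
    using \<alpha> P op_cartesian_pushout
    by (intro exI[of _ "(f, \<alpha>, \<beta>, f')"]) (simp add: Arr_POv_iff S_arr_def)
qed

end

theorem mainTheorem5:
  fixes C :: "('o, 'a) category" and M :: "'a set"
  assumes "is_category C"
    and "stable_system C M"
    and "has_pushouts_along C M"
    and "pushout_stable C M"
  shows "grothendieck_opfibration (POv C M) (restr C M) (S_obj C) S_arr \<and>
         (\<forall>f \<alpha> f' \<beta>. f \<in> Arr C \<longrightarrow> \<alpha> \<in> M \<longrightarrow> cdom C \<alpha> = cdom C f \<longrightarrow>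
            is_pushout C \<alpha> f f' \<beta> \<longrightarrow>
            op_cartesian (POv C M) (restr C M) (S_obj C) S_arr (f, \<alpha>, \<beta>, f'))"
proof -
  interpret pushout_stable_system C M
    by unfold_locales (fact assms)+
  show ?thesis
    using grothendieck_opfibration_S[OF assms(3)] op_cartesian_pushout by blast
qed

end
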